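(* In the setting below (Algorithm 3), for every agent $i$ and every strategy $f_i$, $$\mathbb E_{D\sim\Pi}\mathbb E_D[L_i(\mathrm{id},\dots,\mathrm{id})]\le\mathbb E_{D\sim\Pi}\mathbb E_D[L_i(f_i,(\mathrm{id})_{j\ne i})]+\varepsilon\quad\text{and}\quad\sup_{D\in\mathcal F}\mathbb E_D[L_i(\mathrm{id},\dots,\mathrm{id})]\le\sup_{D\in\mathcal F}\mathbb E_D[L_i(f_i,(\mathrm{id})_{j\ne i})]+\varepsilon$$ with $\varepsilon=\frac14\big(\frac1{|X_i|+|W_i|}+\frac1{|Z_i|}\big)$. Moreover, if for every $k$ the distribution of $\varphi_k(X)$, $X\sim D$, is continuous (atomless) for $\Pi$-almost every $D$ (Bayesian) resp. for every $D\in\mathcal F$ (frequentist), then the corresponding inequality holds with $\varepsilon=\frac1{6(|X_i|+|W_i|)}$.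
   Context: Setting (Algorithm 3). Fix $m\ge2$ agents, a measurable data space $\mathcal X$, measurable feature maps $\varphi_1,\dots,\varphi_K:\mathcal X\to\mathbb R$, and $s:\mathbb N\to\mathbb N$ with $s(n)<n-1$. Conditionally on a distribution $D$ on $\mathcal X$, agent $i$ holds $X_i=(X_{i,1},\dots,X_{i,n_i})$, $n_i\ge1$, i.i.d. from $D$, independent across agents. A strategy is a measurable map $f:\bigcup_{\ell\ge0}\mathcal X^\ell\to\bigcup_{\ell\ge0}\mathcal X^\ell$; agent $i$ submits $X_i'=f_i(X_i)$; $\mathrm{id}$ is the identity (truthful) strategy. $\varphi_k(S)=\{\varphi_k(x):x\in S\}$; for a finite multiset $S\subset\mathbb R$, $F_S(t)=\frac1{|S|}\sum_{s\in S}\mathbf 1\{s\le t\}$ (with $F_\emptyset\equiv 0$). Mechanism: $X'_{-i}=\bigcup_{j\ne i}X'_j$ is split uniformly at random as $\{T_i\}\cup W_i\cup Z_i$ with $|W_i|=s(|X'_{-i}|)$, and $L_i=\frac1K\sum_{k=1}^K\big(F_{\varphi_k(X_i'\cup W_i)}(\varphi_k(T_i))-F_{\varphi_k(Z_i)}(\varphi_k(T_i))\big)^2$. $\mathbb E_D$ is expectation over data i.i.d. from $D$ and all randomness; $\Pi$ is a prior over distributions on $\mathcal X$ (Bayesian), $\mathcal F$ a class of distributions on $\mathcal X$ (frequentist). $|W_i|,|Z_i|$ are determined by the other agents' (truthful) submissions. *)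

theory Defs
  imports "HOL-Probability.Probability"
begin

definition ecdf :: "real multiset \<Rightarrow> real \<Rightarrow> real" where
  "ecdf S t = (if S = {#} then 0
               else real (size (filter_mset (\<lambda>s. s \<le> t) S)) / real (size S))"

text \<open>Measurability w.r.t. the disjoint-union sigma-algebra on lists: on inputs of each length
  the output length is measurable and each output coordinate is measurable on the
  (measurable) set of inputs where it exists.\<close>
definition strategy_measurable :: "'a measure \<Rightarrow> ('a list \<Rightarrow> 'a list) \<Rightarrow> bool" where
  "strategy_measurable M g \<longleftrightarrow>
     (\<forall>l. (\<lambda>x. length (g (map x [0..<l])))
             \<in> measurable (PiM {..<l} (\<lambda>_. M)) (count_space UNIV)
        \<and> (\<forall>j. (\<lambda>x. g (map x [0..<l]) ! j)
             \<in> measurable (restrict_space (PiM {..<l} (\<lambda>_. M))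
                                          {x. j < length (g (map x [0..<l]))}) M))"

definition agent_data :: "(nat \<Rightarrow> nat) \<Rightarrow> (nat \<Rightarrow> nat \<Rightarrow> 'a) \<Rightarrow> nat \<Rightarrow> 'a list" where
  "agent_data n x j = map (x j) [0..<n j]"

definition others_pool :: "nat \<Rightarrow> (nat \<Rightarrow> nat) \<Rightarrow> nat \<Rightarrow> (nat \<Rightarrow> nat \<Rightarrow> 'a) \<Rightarrow> 'a list" where
  "others_pool m n i x = concat (map (agent_data n x) (filter (\<lambda>j. j \<noteq> i) [0..<m]))"

text \<open>All possible splits of positions {0..<N} into a single test position t, a set W of
  size w, and the rest Z = {0..<N} - {t} - W. Choosing uniformly from this set is the
  uniform random split of the mechanism.\<close>
definition splits :: "nat \<Rightarrow> nat \<Rightarrow> (nat \<times> nat set) set" where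
  "splits N w = {(t, W). t < N \<and> W \<subseteq> {..<N} - {t} \<and> card W = w}"

definition split_loss ::
  "nat \<Rightarrow> (nat \<Rightarrow> 'a \<Rightarrow> real) \<Rightarrow> 'a list \<Rightarrow> 'a list \<Rightarrow> nat \<Rightarrow> nat set \<Rightarrow> real" where
  "split_loss K \<phi> Xi' P t W =
     (let T = P ! t;
          A = mset Xi' + image_mset (\<lambda>p. P ! p) (mset_set W);
          Z = image_mset (\<lambda>p. P ! p) (mset_set ({..<length P} - {t} - W))
      in (1 / real K) * (\<Sum>k<K. (ecdf (image_mset (\<phi> k) A) (\<phi> k T)
                                   - ecdf (image_mset (\<phi> k) Z) (\<phi> k T))\<^sup>2))"

definition mech_loss ::
  "nat \<Rightarrow> (nat \<Rightarrow> 'a \<Rightarrow> real) \<Rightarrow> (nat \<Rightarrow> nat) \<Rightarrow> 'a list \<Rightarrow> 'a list \<Rightarrow> real" where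
  "mech_loss K \<phi> s Xi' P =
     (let S = splits (length P) (s (length P))
      in (\<Sum>(t, W)\<in>S. split_loss K \<phi> Xi' P t W) / real (card S))"

definition data_measure :: "nat \<Rightarrow> (nat \<Rightarrow> nat) \<Rightarrow> 'a measure \<Rightarrow> (nat \<Rightarrow> nat \<Rightarrow> 'a) measure" where
  "data_measure m n D = PiM {..<m} (\<lambda>j. PiM {..<n j} (\<lambda>_. D))"

definition expected_loss ::
  "nat \<Rightarrow> (nat \<Rightarrow> nat) \<Rightarrow> nat \<Rightarrow> (nat \<Rightarrow> 'a \<Rightarrow> real) \<Rightarrow> (nat \<Rightarrow> nat) \<Rightarrow> nat
     \<Rightarrow> 'a measure \<Rightarrow> ('a list \<Rightarrow> 'a list) \<Rightarrow> real" where
  "expected_loss m n K \<phi> s i D g =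
     (\<integral>x. mech_loss K \<phi> s (g (agent_data n x i)) (others_pool m n i x) \<partial>data_measure m n D)"

definition atomless_feature :: "'a measure \<Rightarrow> ('a \<Rightarrow> real) \<Rightarrow> bool" where
  "atomless_feature D f \<longleftrightarrow> (\<forall>t. measure (distr D borel f) {t} = 0)"

end

theory Submission
  imports Defs
begin

text \<open>
  Fix a split \<open>(t, W, Z)\<close> of the other agents' data and a feature \<open>\<psi>\<close>; let \<open>G\<close> be the distribution
  function of \<open>\<psi> X\<close> for \<open>X \<sim> D\<close>, \<open>T\<close> the test point and \<open>F\<^sub>A\<close> the empirical distribution function
  of agent \<open>i\<close>'s submission together with \<open>W\<close>. The points of \<open>Z\<close> are i.i.d., independent of \<open>T\<close> and of
  everything agent \<open>i\<close> submits. Integrating them out one at a time, which amounts to resampling one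
  coordinate of a product measure, and expanding the square around \<open>G (\<psi> T)\<close> gives
  \<open>E (F\<^sub>A(T) - F\<^sub>Z(T))\<^sup>2 = E (F\<^sub>A(T) - G (\<psi> T))\<^sup>2 + \<beta> / |Z|\<close> with \<open>\<beta> = E [G (\<psi> X) (1 - G (\<psi> X))]\<close>.
  The first term is nonnegative for every strategy, and for the truthful one \<open>A\<close> consists of
  \<open>n\<^sub>i + |W|\<close> further i.i.d. points, so it equals \<open>\<beta> / (n\<^sub>i + |W|)\<close>. Averaging over splits and features,
  truthful reporting loses at most \<open>\<beta> / (n\<^sub>i + |W|)\<close>. Finally \<open>\<beta> \<le> 1/4\<close> because \<open>G (1 - G) \<le> 1/4\<close>;
  if \<open>\<psi> X\<close> is atomless then ties have probability 0, so \<open>E G (\<psi> X) = 1/2\<close>, and \<open>E G (\<psi> X)\<^sup>2 \<ge> 1/3\<close>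
  because of three i.i.d. points one is at least the other two; hence \<open>\<beta> \<le> 1/6\<close>.
\<close>

section \<open>Bounded measurable functions\<close>

definition bounded_measurable :: "'a measure \<Rightarrow> ('a \<Rightarrow> real) \<Rightarrow> bool" where
  "bounded_measurable M f \<longleftrightarrow> f \<in> borel_measurable M \<and> (\<exists>B. \<forall>x\<in>space M. \<bar>f x\<bar> \<le> B)"

lemma bounded_measurableI:
  "f \<in> borel_measurable M \<Longrightarrow> (\<And>x. x \<in> space M \<Longrightarrow> \<bar>f x\<bar> \<le> B) \<Longrightarrow> bounded_measurable M f"
  unfolding bounded_measurable_def by blast

lemma (in finite_measure) integrable_bounded_measurable:
  assumes "bounded_measurable M f"
  shows "integrable M f"
proof -
  obtain B where "f \<in> borel_measurable M" "\<And>x. x \<in> space M \<Longrightarrow> \<bar>f x\<bar> \<le> B"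
    using assms unfolding bounded_measurable_def by blast
  then show ?thesis by (intro integrable_const_bound[where B = B]) auto
qed

lemma bounded_measurable_const [simp]: "bounded_measurable M (\<lambda>x. c)"
  by (rule bounded_measurableI[where B = "\<bar>c\<bar>"]) auto

lemma bounded_measurable_add:
  assumes "bounded_measurable M f" "bounded_measurable M g"
  shows "bounded_measurable M (\<lambda>x. f x + g x)"
proof -
  obtain B C where "f \<in> borel_measurable M" "g \<in> borel_measurable M"
    and "\<And>x. x \<in> space M \<Longrightarrow> \<bar>f x\<bar> \<le> B" "\<And>x. x \<in> space M \<Longrightarrow> \<bar>g x\<bar> \<le> C"
    using assms unfolding bounded_measurable_def by blast
  moreover have "\<bar>f x + g x\<bar> \<le> B + C" if "x \<in> space M" for x
    using abs_triangle_ineq[of "f x" "g x"] \<open>x \<in> space M \<Longrightarrow> \<bar>f x\<bar> \<le> B\<close> \<open>x \<in> space M \<Longrightarrow> \<bar>g x\<bar> \<le> C\<close> that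
    by linarith
  ultimately show ?thesis
    by (intro bounded_measurableI[where B = "B + C"]) auto
qed

lemma bounded_measurable_mult:
  assumes "bounded_measurable M f" "bounded_measurable M g"
  shows "bounded_measurable M (\<lambda>x. f x * g x)"
proof -
  obtain B C where "f \<in> borel_measurable M" "g \<in> borel_measurable M"
    and "\<And>x. x \<in> space M \<Longrightarrow> \<bar>f x\<bar> \<le> B" "\<And>x. x \<in> space M \<Longrightarrow> \<bar>g x\<bar> \<le> C"
    using assms unfolding bounded_measurable_def by blast
  moreover have "\<bar>f x * g x\<bar> \<le> B * C" if x: "x \<in> space M" for x
    unfolding abs_mult
    using \<open>x \<in> space M \<Longrightarrow> \<bar>f x\<bar> \<le> B\<close> \<open>x \<in> space M \<Longrightarrow> \<bar>g x\<bar> \<le> C\<close> x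
    by (intro mult_mono) (auto intro: order_trans[OF abs_ge_zero])
  ultimately show ?thesis
    by (intro bounded_measurableI[where B = "B * C"]) auto
qed

lemma bounded_measurable_diff:
  "bounded_measurable M f \<Longrightarrow> bounded_measurable M g \<Longrightarrow> bounded_measurable M (\<lambda>x. f x - g x)"
  using bounded_measurable_add[of M f "\<lambda>x. - 1 * g x"] bounded_measurable_mult[of M "\<lambda>x. - 1" g] by simp

lemma bounded_measurable_divide:
  "bounded_measurable M f \<Longrightarrow> bounded_measurable M (\<lambda>x. f x / c)"
  using bounded_measurable_mult[of M f "\<lambda>x. 1 / c"] by simp

lemma bounded_measurable_power2:
  "bounded_measurable M f \<Longrightarrow> bounded_measurable M (\<lambda>x. (f x)\<^sup>2)"
  using bounded_measurable_mult[of M f f] by (simp add: power2_eq_square)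

lemma bounded_measurable_sum:
  "(\<And>a. a \<in> A \<Longrightarrow> bounded_measurable M (f a)) \<Longrightarrow> bounded_measurable M (\<lambda>x. \<Sum>a\<in>A. f a x)"
proof (induction A rule: infinite_finite_induct)
  case (insert a A)
  then show ?case by (simp add: bounded_measurable_add)
qed simp_all

lemma bounded_measurable_compose:
  assumes "f \<in> measurable M N" "bounded_measurable N H"
  shows "bounded_measurable M (\<lambda>x. H (f x))"
proof -
  obtain B where "H \<in> borel_measurable N" "\<And>y. y \<in> space N \<Longrightarrow> \<bar>H y\<bar> \<le> B"
    using assms(2) unfolding bounded_measurable_def by blast
  then show ?thesis
    using measurable_space[OF assms(1)] measurable_compose[OF assms(1)]
    by (intro bounded_measurableI[where B = B]) auto
qed

section \<open>Products of probability measures\<close>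

lemma integral_PiM_resample_coordinate:
  fixes H :: "('i \<Rightarrow> 'b) \<Rightarrow> real"
  assumes M: "\<And>i. i \<in> I \<Longrightarrow> prob_space (M i)" and io: "io \<in> I"
    and bounded: "bounded_measurable (PiM I M) H"
  shows "(\<integral>X. H X \<partial>PiM I M) = (\<integral>X. (\<integral>u. H (X(io := u)) \<partial>M io) \<partial>PiM I M)"
proof -
  have H: "H \<in> borel_measurable (PiM I M)"
    using bounded by (simp add: bounded_measurable_def)
  interpret P: prob_space "PiM I M" using M by (rule prob_space_PiM)
  interpret Mio: prob_space "M io" using M io by blast
  interpret pair_sigma_finite "M io" "PiM I M" ..
  interpret PP: prob_space "M io \<Otimes>\<^sub>M PiM I M" by (rule prob_space_pair) unfold_locales
  have "(\<lambda>(u, X). X(io := u)) \<in> measurable (M io \<Otimes>\<^sub>M PiM I M) (PiM (insert io I) M)"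
    by measurable
  then have upd: "(\<lambda>(u, X). X(io := u)) \<in> measurable (M io \<Otimes>\<^sub>M PiM I M) (PiM I M)"
    using io by (simp add: insert_absorb)
  have "(\<integral>X. H X \<partial>PiM I M) = (\<integral>X. H X \<partial>distr (M io \<Otimes>\<^sub>M PiM I M) (PiM I M) (\<lambda>(u, X). X(io := u)))"
    using distr_pair_PiM_eq_PiM[of I M io] M io by (simp add: insert_absorb)
  also have "\<dots> = (\<integral>z. H (case z of (u, X) \<Rightarrow> X(io := u)) \<partial>(M io \<Otimes>\<^sub>M PiM I M))"
    by (rule integral_distr[OF upd H])
  also have "\<dots> = (\<integral>X. (\<integral>u. H (X(io := u)) \<partial>M io) \<partial>PiM I M)"
  proof (subst integral_snd)
    show "integrable (M io \<Otimes>\<^sub>M PiM I M) (\<lambda>(u, X). H (X(io := u)))"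
      using PP.integrable_bounded_measurable[OF bounded_measurable_compose[OF upd bounded]]
      by (simp add: case_prod_beta')
  qed (simp add: case_prod_beta')
  finally show ?thesis .
qed

lemma measurable_PiM_prob_algebra:
  assumes F: "\<And>i. i \<in> I \<Longrightarrow> F i \<in> measurable L (prob_algebra (N i))"
  shows "(\<lambda>a. PiM I (\<lambda>i. F i a)) \<in> measurable L (prob_algebra (PiM I N))"
proof -
  have F_prob: "prob_space (F i a)" and F_sets: "sets (F i a) = sets (N i)"
    if "i \<in> I" "a \<in> space L" for i a
    using measurable_space[OF F[OF that(1)] that(2)] by (auto simp: space_prob_algebra)
  show ?thesis
  proof (rule measurable_prob_algebra_generated[OF sets_PiM Int_stable_prod_algebra prod_algebra_sets_into_space])
    fix a assume "a \<in> space L"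
    then show "prob_space (PiM I (\<lambda>i. F i a))" "sets (PiM I (\<lambda>i. F i a)) = sets (PiM I N)"
      using F_prob F_sets by (auto intro!: prob_space_PiM sets_PiM_cong)
  next
    fix A assume "A \<in> prod_algebra I N"
    then obtain J E where A: "A = prod_emb I N J (PiE J E)" "finite J" "J \<subseteq> I"
      and E: "\<And>i. i \<in> J \<Longrightarrow> E i \<in> sets (N i)"
      by (rule prod_algebraE) blast
    have "emeasure (PiM I (\<lambda>i. F i a)) A = (\<Prod>i\<in>J. emeasure (F i a) (E i))" if a: "a \<in> space L" for a
    proof -
      have "space (F i a) = space (N i)" if "i \<in> I" for i
        using F_sets[OF that a] by (rule sets_eq_imp_space_eq)
      then have "A = prod_emb I (\<lambda>i. F i a) J (PiE J E)"
        unfolding A(1) prod_emb_def by (auto simp: PiE_def Pi_def)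
      then show ?thesis
        using A E F_prob[OF _ a] F_sets[OF _ a] by (auto intro!: emeasure_PiM_emb)
    qed
    moreover have "(\<lambda>a. \<Prod>i\<in>J. emeasure (F i a) (E i)) \<in> borel_measurable L"
    proof (rule borel_measurable_prod_ennreal)
      fix i assume "i \<in> J"
      then show "(\<lambda>a. emeasure (F i a) (E i)) \<in> borel_measurable L"
        using measurable_compose[OF measurable_prob_algebraD[OF F] measurable_emeasure_subprob_algebra] E A(3)
        by blast
    qed
    ultimately show "(\<lambda>a. emeasure (PiM I (\<lambda>i. F i a)) A) \<in> borel_measurable L"
      by (subst measurable_cong) auto
  qed
qed

section \<open>Entries of the data\<close>

definition entry :: "(nat \<Rightarrow> nat \<Rightarrow> 'a) \<Rightarrow> nat \<times> nat \<Rightarrow> 'a" where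
  "entry X c = X (fst c) (snd c)"

definition update_entry :: "nat \<times> nat \<Rightarrow> (nat \<Rightarrow> nat \<Rightarrow> 'a) \<Rightarrow> 'a \<Rightarrow> nat \<Rightarrow> nat \<Rightarrow> 'a" where
  "update_entry c X y = X(fst c := (X (fst c))(snd c := y))"

definition ignores_entry :: "nat \<times> nat \<Rightarrow> ((nat \<Rightarrow> nat \<Rightarrow> 'a) \<Rightarrow> 'b) \<Rightarrow> bool" where
  "ignores_entry c H \<longleftrightarrow> (\<forall>X y. H (update_entry c X y) = H X)"

lemma entry_update_entry [simp]: "entry (update_entry c X y) d = (if d = c then y else entry X d)"
  by (cases c; cases d) (auto simp: entry_def update_entry_def)

lemma measurable_update_entry:
  assumes "fst c < m" "snd c < n (fst c)"
  shows "(\<lambda>(X, y). update_entry c X y) \<in> measurable (data_measure m n D \<Otimes>\<^sub>M D) (data_measure m n D)"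
proof -
  let ?Q = "\<lambda>j. PiM {..<n j} (\<lambda>_. D)"
  let ?S = "PiM {..<m} ?Q \<Otimes>\<^sub>M D"
  have row: "(\<lambda>z. (fst z (fst c), snd z)) \<in> measurable ?S (?Q (fst c) \<Otimes>\<^sub>M D)"
    using assms by (intro measurable_Pair measurable_compose[OF measurable_fst measurable_component_singleton]) auto
  have "(\<lambda>z. (fst z (fst c))(snd c := snd z)) \<in> measurable ?S (PiM (insert (snd c) {..<n (fst c)}) (\<lambda>_. D))"
    using measurable_compose[OF row measurable_add_dim] by simp
  then have "(\<lambda>z. (fst z, (fst z (fst c))(snd c := snd z))) \<in> measurable ?S (PiM {..<m} ?Q \<Otimes>\<^sub>M ?Q (fst c))"
    using assms by (intro measurable_Pair) (simp_all add: insert_absorb)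
  from measurable_compose[OF this measurable_add_dim]
  show ?thesis
    using assms by (simp add: data_measure_def update_entry_def case_prod_beta' insert_absorb)
qed

lemma bounded_measurable_integral_update_entry:
  assumes D: "prob_space D" and c: "fst c < m" "snd c < n (fst c)"
    and bounded: "bounded_measurable (data_measure m n D) H"
  shows "bounded_measurable (data_measure m n D) (\<lambda>X. \<integral>y. H (update_entry c X y) \<partial>D)"
proof -
  interpret D: prob_space D by (fact D)
  note upd = measurable_update_entry[of c m n D, OF c]
  obtain B where H: "H \<in> borel_measurable (data_measure m n D)"
    and H_bound: "\<And>X. X \<in> space (data_measure m n D) \<Longrightarrow> \<bar>H X\<bar> \<le> B"
    using bounded unfolding bounded_measurable_def by blast
  show ?thesis
  proof (rule bounded_measurableI[where B = B])
    show "(\<lambda>X. \<integral>y. H (update_entry c X y) \<partial>D) \<in> borel_measurable (data_measure m n D)"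
      using measurable_compose[OF upd H] by (intro D.borel_measurable_lebesgue_integral) (simp add: case_prod_beta')
    fix X assume "X \<in> space (data_measure m n D)"
    then have bound: "\<bar>H (update_entry c X y)\<bar> \<le> B" if "y \<in> space D" for y
      using H_bound measurable_space[OF upd] that by (auto simp: space_pair_measure)
    have "\<bar>\<integral>y. H (update_entry c X y) \<partial>D\<bar> \<le> (\<integral>y. \<bar>H (update_entry c X y)\<bar> \<partial>D)"
      by (rule integral_abs_bound)
    also have "\<dots> \<le> (\<integral>y. B \<partial>D)"
      using bound D.not_empty by (intro integral_mono_AE') (auto intro: order_trans[OF abs_ge_zero])
    finally show "\<bar>\<integral>y. H (update_entry c X y) \<partial>D\<bar> \<le> B"
      by (simp add: D.prob_space)
  qed
qed

lemma integral_data_measure_resample_entry: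
  fixes H :: "(nat \<Rightarrow> nat \<Rightarrow> 'a) \<Rightarrow> real"
  assumes D: "prob_space D" and c: "fst c < m" "snd c < n (fst c)"
    and bounded: "bounded_measurable (data_measure m n D) H"
  shows "(\<integral>X. H X \<partial>data_measure m n D) = (\<integral>X. (\<integral>y. H (update_entry c X y) \<partial>D) \<partial>data_measure m n D)"
proof -
  let ?Q = "\<lambda>j. PiM {..<n j} (\<lambda>_. D)"
  let ?\<mu> = "data_measure m n D"
  have \<mu>: "?\<mu> = PiM {..<m} ?Q" by (simp add: data_measure_def)
  have Q: "\<And>j. prob_space (?Q j)" using D by (intro prob_space_PiM) auto
  have row: "(\<integral>u. H (X(fst c := u)) \<partial>?Q (fst c)) = (\<integral>u. (\<integral>y. H (update_entry c (X(fst c := u)) y) \<partial>D) \<partial>?Q (fst c))"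
    if "X \<in> space ?\<mu>" for X
  proof -
    have "X \<in> space (PiM {..<m} ?Q)" using that by (simp add: \<mu>)
    from measurable_Pair2[OF measurable_add_dim[of "fst c" "{..<m}" ?Q] this]
    have "(\<lambda>u. X(fst c := u)) \<in> measurable (?Q (fst c)) ?\<mu>"
      using c by (simp add: \<mu> insert_absorb)
    then have "(\<integral>u. H (X(fst c := u)) \<partial>?Q (fst c)) = (\<integral>u. (\<integral>y. H (X(fst c := u(snd c := y))) \<partial>D) \<partial>?Q (fst c))"
      using c D by (intro integral_PiM_resample_coordinate bounded_measurable_compose[OF _ bounded]) auto
    then show ?thesis by (simp add: update_entry_def)
  qed
  have "(\<integral>X. H X \<partial>?\<mu>) = (\<integral>X. (\<integral>u. H (X(fst c := u)) \<partial>?Q (fst c)) \<partial>?\<mu>)"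
    unfolding \<mu> using Q c bounded by (intro integral_PiM_resample_coordinate) (auto simp: \<mu>)
  also have "\<dots> = (\<integral>X. (\<integral>u. (\<integral>y. H (update_entry c (X(fst c := u)) y) \<partial>D) \<partial>?Q (fst c)) \<partial>?\<mu>)"
    by (intro Bochner_Integration.integral_cong refl row)
  also have "\<dots> = (\<integral>X. (\<integral>y. H (update_entry c X y) \<partial>D) \<partial>?\<mu>)"
    unfolding \<mu> using Q c bounded_measurable_integral_update_entry[OF D c bounded]
    by (intro integral_PiM_resample_coordinate[symmetric]) (auto simp: \<mu>)
  finally show ?thesis .
qed

lemma prob_space_data_measure: "prob_space D \<Longrightarrow> prob_space (data_measure m n D)"
  unfolding data_measure_def by (intro prob_space_PiM) auto

lemma measurable_data_measure:
  "(\<lambda>D. data_measure m n D) \<in> measurable (prob_algebra M) (prob_algebra (data_measure m n M))"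
  unfolding data_measure_def
proof (rule measurable_PiM_prob_algebra)
  show "(\<lambda>D. PiM {..<n j} (\<lambda>_. D)) \<in> measurable (prob_algebra M) (prob_algebra (PiM {..<n j} (\<lambda>_. M)))" for j
    using measurable_PiM_prob_algebra[of "{..<n j}" "\<lambda>_ D. D" "prob_algebra M" "\<lambda>_. M"] by simp
qed

section \<open>Empirical distribution functions and the loss\<close>

lemma size_filter_image_mset:
  "real (size (filter_mset P (image_mset f A))) = (\<Sum>a\<in>#A. of_bool (P (f a)))"
  by (induction A) auto

lemma ecdf_image_mset: "ecdf (image_mset f A) t = (\<Sum>a\<in>#A. of_bool (f a \<le> t)) / size A"
  by (simp add: ecdf_def size_filter_image_mset)

lemma ecdf_bounds: "0 \<le> ecdf S t" "ecdf S t \<le> 1"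
  using size_filter_mset_lesseq[of "\<lambda>s. s \<le> t" S] by (auto simp: ecdf_def divide_le_eq_1 nonempty_has_size)

definition feature_sq_gap :: "('a \<Rightarrow> real) \<Rightarrow> 'a list \<Rightarrow> 'a list \<Rightarrow> nat \<Rightarrow> nat set \<Rightarrow> real" where
  "feature_sq_gap \<psi> xs P t W =
     (ecdf (image_mset \<psi> (mset xs + image_mset ((!) P) (mset_set W))) (\<psi> (P ! t))
      - ecdf (image_mset \<psi> (image_mset ((!) P) (mset_set ({..<length P} - {t} - W)))) (\<psi> (P ! t)))\<^sup>2"

lemma feature_sq_gap_bounds: "0 \<le> feature_sq_gap \<psi> xs P t W" "feature_sq_gap \<psi> xs P t W \<le> 1"
proof -
  have "\<bar>ecdf S t - ecdf S' t\<bar> \<le> 1" for S S' t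
    using ecdf_bounds[of S t] ecdf_bounds[of S' t] by linarith
  then show "0 \<le> feature_sq_gap \<psi> xs P t W" "feature_sq_gap \<psi> xs P t W \<le> 1"
    unfolding feature_sq_gap_def by (simp_all add: abs_square_le_1)
qed

text \<open>No side conditions: if \<open>K = 0\<close> or there is no split, both sides are \<open>0\<close> since \<open>x / 0 = 0\<close>.\<close>

lemma mech_loss_eq_average:
  "mech_loss K \<phi> s xs P =
     (\<Sum>((t, W), k)\<in>splits (length P) (s (length P)) \<times> {..<K}. feature_sq_gap (\<phi> k) xs P t W)
     / card (splits (length P) (s (length P)) \<times> {..<K})"
proof -
  have "split_loss K \<phi> xs P t W = (\<Sum>k<K. feature_sq_gap (\<phi> k) xs P t W) / K" for t W
    by (simp add: split_loss_def feature_sq_gap_def Let_def)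
  moreover have "(\<Sum>p\<in>S. \<Sum>k<K. feature_sq_gap (\<phi> k) xs P (fst p) (snd p))
      = (\<Sum>((t, W), k)\<in>S \<times> {..<K}. feature_sq_gap (\<phi> k) xs P t W)" for S
    by (simp add: sum.cartesian_product split_beta)
  ultimately show ?thesis
    by (simp add: mech_loss_def Let_def case_prod_unfold sum_divide_distrib[symmetric] card_cartesian_product
        mult.commute)
qed

lemma mech_loss_bounds: "0 \<le> mech_loss K \<phi> s xs P" "mech_loss K \<phi> s xs P \<le> 1"
proof -
  let ?A = "splits (length P) (s (length P)) \<times> {..<K}"
  let ?S = "\<Sum>((t, W), k)\<in>?A. feature_sq_gap (\<phi> k) xs P t W"
  have "0 \<le> ?S" "?S \<le> card ?A"
    using sum_bounded_above[of ?A "\<lambda>((t, W), k). feature_sq_gap (\<phi> k) xs P t W" 1]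
    by (auto intro!: sum_nonneg simp: feature_sq_gap_bounds split_beta)
  then show "0 \<le> mech_loss K \<phi> s xs P" "mech_loss K \<phi> s xs P \<le> 1"
    unfolding mech_loss_eq_average by (auto simp: divide_le_eq_1)
qed

lemma finite_splits: "finite (splits N w)"
  by (rule finite_subset[of _ "{..<N} \<times> Pow {..<N}"]) (auto simp: splits_def)

lemma splits_nonempty: "w < N \<Longrightarrow> splits N w \<noteq> {}"
proof -
  assume "w < N"
  then have "(0, {1..w}) \<in> splits N w" by (auto simp: splits_def)
  then show ?thesis by blast
qed

definition pool_entries :: "nat \<Rightarrow> (nat \<Rightarrow> nat) \<Rightarrow> nat \<Rightarrow> (nat \<times> nat) list" where
  "pool_entries m n i = concat (map (\<lambda>j. map (Pair j) [0..<n j]) (filter (\<lambda>j. j \<noteq> i) [0..<m]))"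

lemma others_pool_eq_map_entry: "others_pool m n i X = map (entry X) (pool_entries m n i)"
  unfolding others_pool_def pool_entries_def agent_data_def[abs_def]
  by (simp add: map_concat comp_def entry_def)

lemma length_others_pool [simp]: "length (others_pool m n i X) = length (pool_entries m n i)"
  by (simp add: others_pool_eq_map_entry)

lemma set_pool_entries: "set (pool_entries m n i) = {c. fst c < m \<and> fst c \<noteq> i \<and> snd c < n (fst c)}"
  unfolding pool_entries_def by force

lemma distinct_pool_entries: "distinct (pool_entries m n i)"
proof -
  have "distinct js \<Longrightarrow> distinct (concat (map (\<lambda>j. map (Pair j) [0..<n j]) js))" for js
    by (induction js) (auto simp: distinct_map inj_on_def)
  then show ?thesis unfolding pool_entries_def by simp
qed

lemma length_pool_entries: "length (pool_entries m n i) = (\<Sum>j\<in>{..<m} - {i}. n j)"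
proof -
  have "length (pool_entries m n i) = (\<Sum>j\<leftarrow>filter (\<lambda>j. j \<noteq> i) [0..<m]. n j)"
    by (simp add: pool_entries_def length_concat comp_def)
  also have "\<dots> = (\<Sum>j\<in>{..<m} - {i}. n j)"
    by (subst sum_list_distinct_conv_sum_set) (auto intro: sum.cong)
  finally show ?thesis .
qed

lemma strategy_measurable_id: "strategy_measurable M id"
  unfolding strategy_measurable_def
proof (intro allI conjI)
  fix l j
  show "(\<lambda>x. length (id (map x [0..<l]))) \<in> measurable (PiM {..<l} (\<lambda>_. M)) (count_space UNIV)"
    by simp
  show "(\<lambda>x. id (map x [0..<l]) ! j)
      \<in> measurable (restrict_space (PiM {..<l} (\<lambda>_. M)) {x. j < length (id (map x [0..<l]))}) M"
  proof (cases "j < l")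
    case True
    then have "(\<lambda>x. x j) \<in> measurable (restrict_space (PiM {..<l} (\<lambda>_. M)) {x. j < length (id (map x [0..<l]))}) M"
      by (intro measurable_restrict_space1) simp
    then show ?thesis
      by (rule measurable_cong[THEN iffD1, rotated]) (use True in simp)
  next
    case False
    then have "space (restrict_space (PiM {..<l} (\<lambda>_. M)) {x. j < length (id (map x [0..<l]))}) = {}"
      by (simp add: space_restrict_space)
    then show ?thesis
      unfolding measurable_def by (auto simp: sets_restrict_space)
  qed
qed

section \<open>Comparisons between i.i.d. data points\<close>

locale iid_data =
  fixes D :: "'a measure" and m :: nat and n :: "nat \<Rightarrow> nat" and \<psi> :: "'a \<Rightarrow> real"
  assumes prob_space_D: "prob_space D" and measurable_\<psi> [measurable]: "\<psi> \<in> borel_measurable D"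
begin

abbreviation \<mu> :: "(nat \<Rightarrow> nat \<Rightarrow> 'a) measure" where
  "\<mu> \<equiv> data_measure m n D"

definition entries :: "(nat \<times> nat) set" where
  "entries = {c. fst c < m \<and> snd c < n (fst c)}"

definition G :: "real \<Rightarrow> real" where
  "G t = measure D {y \<in> space D. \<psi> y \<le> t}"

definition indicator_variance :: real where
  "indicator_variance = (\<integral>y. G (\<psi> y) * (1 - G (\<psi> y)) \<partial>D)"

definition le_entry :: "nat \<times> nat \<Rightarrow> nat \<times> nat \<Rightarrow> (nat \<Rightarrow> nat \<Rightarrow> 'a) \<Rightarrow> real" where
  "le_entry c d X = of_bool (\<psi> (entry X c) \<le> \<psi> (entry X d))"

definition centered_le_entry :: "nat \<times> nat \<Rightarrow> nat \<times> nat \<Rightarrow> (nat \<Rightarrow> nat \<Rightarrow> 'a) \<Rightarrow> real" where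
  "centered_le_entry c d X = le_entry c d X - G (\<psi> (entry X d))"

definition entry_ecdf :: "(nat \<times> nat) set \<Rightarrow> nat \<times> nat \<Rightarrow> (nat \<Rightarrow> nat \<Rightarrow> 'a) \<Rightarrow> real" where
  "entry_ecdf C d X = (\<Sum>c\<in>C. le_entry c d X) / card C"

sublocale D: prob_space D
  by (fact prob_space_D)

sublocale prob_space \<mu>
  using prob_space_D by (rule prob_space_data_measure)

lemma measurable_entry [measurable]:
  assumes "c \<in> entries"
  shows "(\<lambda>X. entry X c) \<in> measurable \<mu> D"
proof -
  have "fst c \<in> {..<m}" "snd c \<in> {..<n (fst c)}" using assms by (auto simp: entries_def)
  from measurable_compose[OF measurable_component_singleton[OF this(1), of "\<lambda>j. PiM {..<n j} (\<lambda>_. D)"]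
      measurable_component_singleton[OF this(2), of "\<lambda>_. D"]]
  show ?thesis
    unfolding entry_def data_measure_def .
qed

lemma G_bounds: "0 \<le> G t" "G t \<le> 1"
  by (simp_all add: G_def)

lemma mono_G: "mono G"
  unfolding G_def by (intro monoI D.finite_measure_mono) auto

lemma measurable_G [measurable]: "G \<in> borel_measurable borel"
  by (rule borel_measurable_mono[OF mono_G])

lemma bounded_measurable_G_\<psi>: "bounded_measurable D (\<lambda>y. G (\<psi> y))"
  using G_bounds by (intro bounded_measurableI[where B = 1]) auto

lemma integral_of_bool_le: "(\<integral>y. of_bool (\<psi> y \<le> t) \<partial>D) = G t"
proof -
  have "(\<integral>y. of_bool (\<psi> y \<le> t) \<partial>D) = (\<integral>y. indicator {y \<in> space D. \<psi> y \<le> t} y \<partial>D)"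
    by (intro Bochner_Integration.integral_cong) (auto simp: indicator_def)
  also have "\<dots> = G t"
    unfolding G_def by (simp add: Collect_subset[THEN Int_absorb2])
  finally show ?thesis .
qed

lemma indicator_variance_le_quarter: "indicator_variance \<le> 1 / 4"
proof -
  have "G (\<psi> y) * (1 - G (\<psi> y)) \<le> 1 / 4" for y
    using sum_squares_ge_zero[of "G (\<psi> y) - 1 / 2" 0] by (simp add: algebra_simps power2_eq_square)
  then show ?thesis
    unfolding indicator_variance_def using G_bounds
    by (intro D.integral_le_const AE_I2 D.integrable_const_bound[where B = 1]) (auto simp: abs_le_iff mult_le_one)
qed

lemma integral_entry:
  fixes h :: "'a \<Rightarrow> real"
  assumes c: "c \<in> entries" and h: "bounded_measurable D h"
  shows "(\<integral>X. h (entry X c) \<partial>\<mu>) = (\<integral>y. h y \<partial>D)"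
proof -
  have "(\<integral>X. h (entry X c) \<partial>\<mu>) = (\<integral>X. (\<integral>y. h (entry (update_entry c X y) c) \<partial>D) \<partial>\<mu>)"
    using c by (intro integral_data_measure_resample_entry[OF prob_space_D]
        bounded_measurable_compose[OF measurable_entry h]) (auto simp: entries_def)
  then show ?thesis by (simp add: prob_space)
qed

lemma integral_mult_integrate_out_entry:
  fixes H V :: "(nat \<Rightarrow> nat \<Rightarrow> 'a) \<Rightarrow> real" and \<rho> :: "real \<Rightarrow> real \<Rightarrow> real"
  assumes b: "b \<in> entries" and H: "bounded_measurable \<mu> H" and V: "V \<in> borel_measurable \<mu>"
    and ignores: "ignores_entry b H" "ignores_entry b V"
    and \<rho>: "(\<lambda>(s, t). \<rho> s t) \<in> borel_measurable (borel \<Otimes>\<^sub>M borel)" and \<rho>_bound: "\<And>s t. \<bar>\<rho> s t\<bar> \<le> 1"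
  shows "(\<integral>X. H X * \<rho> (\<psi> (entry X b)) (V X) \<partial>\<mu>) = (\<integral>X. H X * (\<integral>y. \<rho> (\<psi> y) (V X) \<partial>D) \<partial>\<mu>)"
proof -
  have "(\<lambda>X. \<rho> (\<psi> (entry X b)) (V X)) \<in> borel_measurable \<mu>"
    using measurable_compose[OF measurable_Pair[OF measurable_compose[OF measurable_entry[OF b] measurable_\<psi>] V] \<rho>]
    by simp
  then have "bounded_measurable \<mu> (\<lambda>X. H X * \<rho> (\<psi> (entry X b)) (V X))"
    using \<rho>_bound by (intro bounded_measurable_mult[OF H] bounded_measurableI[where B = 1])
  then have "(\<integral>X. H X * \<rho> (\<psi> (entry X b)) (V X) \<partial>\<mu>)
      = (\<integral>X. (\<integral>y. H (update_entry b X y) * \<rho> (\<psi> (entry (update_entry b X y) b)) (V (update_entry b X y)) \<partial>D) \<partial>\<mu>)"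
    using b by (intro integral_data_measure_resample_entry[OF prob_space_D]) (auto simp: entries_def)
  also have "\<dots> = (\<integral>X. H X * (\<integral>y. \<rho> (\<psi> y) (V X) \<partial>D) \<partial>\<mu>)"
    using ignores by (simp add: ignores_entry_def)
  finally show ?thesis .
qed

lemma bounded_measurable_le_entry:
  assumes "c \<in> entries" "d \<in> entries"
  shows "bounded_measurable \<mu> (le_entry c d)"
proof (rule bounded_measurableI[where B = 1])
  have [measurable]: "(\<lambda>X. \<psi> (entry X c)) \<in> borel_measurable \<mu>" "(\<lambda>X. \<psi> (entry X d)) \<in> borel_measurable \<mu>"
    using assms by (auto intro: measurable_compose[OF measurable_entry measurable_\<psi>])
  show "le_entry c d \<in> borel_measurable \<mu>"
    unfolding le_entry_def of_bool_def by measurable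
qed (simp add: le_entry_def)

lemma bounded_measurable_G_entry:
  assumes "d \<in> entries"
  shows "bounded_measurable \<mu> (\<lambda>X. G (\<psi> (entry X d)))"
  using assms G_bounds by (intro bounded_measurableI[where B = 1]) auto

lemma measurable_of_bool_le: "(\<lambda>(s, t :: real). of_bool (s \<le> t) :: real) \<in> borel_measurable (borel \<Otimes>\<^sub>M borel)"
  unfolding of_bool_def by measurable

lemma integral_mult_le_entry:
  assumes c: "c \<in> entries" and d: "d \<in> entries" and "c \<noteq> d"
    and H: "bounded_measurable \<mu> H" and ignores: "ignores_entry c H"
  shows "(\<integral>X. H X * le_entry c d X \<partial>\<mu>) = (\<integral>X. H X * G (\<psi> (entry X d)) \<partial>\<mu>)"
proof -
  have "ignores_entry c (\<lambda>X. \<psi> (entry X d))"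
    using \<open>c \<noteq> d\<close> by (simp add: ignores_entry_def)
  from integral_mult_integrate_out_entry[OF c H _ ignores this measurable_of_bool_le]
  show ?thesis
    using measurable_compose[OF measurable_entry[OF d] measurable_\<psi>]
    by (simp add: le_entry_def integral_of_bool_le)
qed

lemma integral_mult_centered_le_entry:
  assumes "c \<in> entries" "d \<in> entries" "c \<noteq> d" "bounded_measurable \<mu> H" "ignores_entry c H"
  shows "(\<integral>X. H X * centered_le_entry c d X \<partial>\<mu>) = 0"
proof -
  have "integrable \<mu> (\<lambda>X. H X * le_entry c d X)" "integrable \<mu> (\<lambda>X. H X * G (\<psi> (entry X d)))"
    using assms
    by (auto intro!: integrable_bounded_measurable bounded_measurable_mult bounded_measurable_le_entry
        bounded_measurable_G_entry)
  then show ?thesis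
    using integral_mult_le_entry[OF assms] by (simp add: centered_le_entry_def right_diff_distrib)
qed

lemma bounded_measurable_centered_le_entry:
  "c \<in> entries \<Longrightarrow> d \<in> entries \<Longrightarrow> bounded_measurable \<mu> (centered_le_entry c d)"
  unfolding centered_le_entry_def
  by (intro bounded_measurable_diff bounded_measurable_le_entry bounded_measurable_G_entry)

lemma integral_centered_le_entry_sq:
  assumes c: "c \<in> entries" and d: "d \<in> entries" and "c \<noteq> d"
  shows "(\<integral>X. (centered_le_entry c d X)\<^sup>2 \<partial>\<mu>) = indicator_variance"
proof -
  let ?G = "\<lambda>X. G (\<psi> (entry X d))"
  have ignores: "ignores_entry c ?G" "ignores_entry c (\<lambda>X. 1 - ?G X)"
    using \<open>c \<noteq> d\<close> by (simp_all add: ignores_entry_def)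
  have G: "bounded_measurable \<mu> ?G" "bounded_measurable \<mu> (\<lambda>X. 1 - ?G X)"
    using d by (auto intro: bounded_measurable_diff bounded_measurable_G_entry)
  \<comment> \<open>since \<open>le_entry c d X\<close> is 0 or 1, it equals its square\<close>
  have sq: "(centered_le_entry c d X)\<^sup>2 = (1 - ?G X) * le_entry c d X - ?G X * centered_le_entry c d X" for X
    by (simp add: centered_le_entry_def le_entry_def power2_eq_square algebra_simps)
  have "(\<integral>X. (1 - ?G X) * le_entry c d X \<partial>\<mu>) = (\<integral>X. G (\<psi> (entry X d)) * (1 - G (\<psi> (entry X d))) \<partial>\<mu>)"
    using integral_mult_le_entry[OF c d \<open>c \<noteq> d\<close> G(2) ignores(2)] by (simp add: mult.commute)
  also have "\<dots> = indicator_variance"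
    unfolding indicator_variance_def using d
    by (intro integral_entry bounded_measurable_mult bounded_measurable_diff bounded_measurable_G_\<psi>) simp_all
  finally have "(\<integral>X. (1 - ?G X) * le_entry c d X \<partial>\<mu>) = indicator_variance" .
  moreover have "(\<integral>X. ?G X * centered_le_entry c d X \<partial>\<mu>) = 0"
    by (rule integral_mult_centered_le_entry[OF c d \<open>c \<noteq> d\<close> G(1) ignores(1)])
  moreover have "integrable \<mu> (\<lambda>X. (1 - ?G X) * le_entry c d X)" "integrable \<mu> (\<lambda>X. ?G X * centered_le_entry c d X)"
    using c d G
    by (auto intro!: integrable_bounded_measurable bounded_measurable_mult bounded_measurable_le_entry
        bounded_measurable_centered_le_entry)
  ultimately show ?thesis by (simp add: sq)
qed

lemma integral_sq_average_centered_le_entry: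
  assumes C: "finite C" "C \<subseteq> entries" and d: "d \<in> entries" "d \<notin> C"
  shows "(\<integral>X. ((\<Sum>c\<in>C. centered_le_entry c d X) / card C)\<^sup>2 \<partial>\<mu>) = indicator_variance / card C"
proof -
  let ?r = "\<lambda>c X. centered_le_entry c d X"
  have integrable: "integrable \<mu> (\<lambda>X. ?r c X * ?r c' X)" if "c \<in> C" "c' \<in> C" for c c'
    using that C d
    by (auto intro!: integrable_bounded_measurable bounded_measurable_mult bounded_measurable_centered_le_entry)
  have cross: "(\<integral>X. ?r c X * ?r c' X \<partial>\<mu>) = (if c = c' then indicator_variance else 0)"
    if "c \<in> C" "c' \<in> C" for c c'
  proof (cases "c = c'")
    case True
    then show ?thesis
      using that C d integral_centered_le_entry_sq[of c d] by (auto simp: power2_eq_square)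
  next
    case False
    have "ignores_entry c (?r c')"
      using False that d by (auto simp: ignores_entry_def centered_le_entry_def le_entry_def)
    then have "(\<integral>X. ?r c' X * ?r c X \<partial>\<mu>) = 0"
      using that C d by (intro integral_mult_centered_le_entry bounded_measurable_centered_le_entry) auto
    then show ?thesis
      using False by (simp add: mult.commute)
  qed
  have "(\<integral>X. ((\<Sum>c\<in>C. ?r c X) / card C)\<^sup>2 \<partial>\<mu>) = (\<integral>X. (\<Sum>c\<in>C. \<Sum>c'\<in>C. ?r c X * ?r c' X) / (card C)\<^sup>2 \<partial>\<mu>)"
    by (simp add: power_divide power2_eq_square sum_product)
  also have "\<dots> = (\<Sum>c\<in>C. \<Sum>c'\<in>C. \<integral>X. ?r c X * ?r c' X \<partial>\<mu>) / (card C)\<^sup>2"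
    using integrable by (simp add: Bochner_Integration.integral_sum Bochner_Integration.integrable_sum)
  also have "\<dots> = indicator_variance / card C"
    using C by (simp add: cross power2_eq_square)
  finally show ?thesis .
qed

lemma integral_sq_minus_entry_ecdf:
  assumes C: "finite C" "C \<subseteq> entries" "C \<noteq> {}" and d: "d \<in> entries" "d \<notin> C"
    and F: "bounded_measurable \<mu> F" "\<And>c. c \<in> C \<Longrightarrow> ignores_entry c F"
  shows "(\<integral>X. (F X - entry_ecdf C d X)\<^sup>2 \<partial>\<mu>)
    = (\<integral>X. (F X - G (\<psi> (entry X d)))\<^sup>2 \<partial>\<mu>) + indicator_variance / card C"
proof -
  define a where "a X = F X - G (\<psi> (entry X d))" for X
  define b where "b X = (\<Sum>c\<in>C. centered_le_entry c d X) / card C" for X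
  have a: "bounded_measurable \<mu> a"
    unfolding a_def using F d by (intro bounded_measurable_diff bounded_measurable_G_entry)
  have b: "bounded_measurable \<mu> b"
    unfolding b_def using C d
    by (intro bounded_measurable_divide bounded_measurable_sum bounded_measurable_centered_le_entry) auto
  have "(\<integral>X. a X * b X \<partial>\<mu>) = (\<Sum>c\<in>C. \<integral>X. a X * centered_le_entry c d X \<partial>\<mu>) / card C"
    unfolding b_def using C a d
    by (auto simp: sum_distrib_left sum_divide_distrib[symmetric] subset_iff
        intro!: Bochner_Integration.integral_sum integrable_bounded_measurable bounded_measurable_mult
        bounded_measurable_centered_le_entry)
  also have "\<dots> = 0"
  proof -
    have "ignores_entry c a" if "c \<in> C" for c
      using F(2)[OF that] d that by (auto simp: ignores_entry_def a_def)
    then have "(\<Sum>c\<in>C. \<integral>X. a X * centered_le_entry c d X \<partial>\<mu>) = 0"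
      using C d a by (intro sum.neutral ballI integral_mult_centered_le_entry) auto
    then show ?thesis by simp
  qed
  finally have cross: "(\<integral>X. a X * b X \<partial>\<mu>) = 0" .
  have "entry_ecdf C d X = G (\<psi> (entry X d)) + b X" for X
    using C by (simp add: entry_ecdf_def b_def centered_le_entry_def sum_subtractf field_simps)
  then have "(F X - entry_ecdf C d X)\<^sup>2 = (a X)\<^sup>2 - 2 * (a X * b X) + (b X)\<^sup>2" for X
    by (simp add: a_def power2_eq_square algebra_simps)
  then have "(\<integral>X. (F X - entry_ecdf C d X)\<^sup>2 \<partial>\<mu>) = (\<integral>X. (a X)\<^sup>2 \<partial>\<mu>) - 2 * (\<integral>X. a X * b X \<partial>\<mu>) + (\<integral>X. (b X)\<^sup>2 \<partial>\<mu>)"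
    using a b by (simp add: integrable_bounded_measurable bounded_measurable_mult bounded_measurable_power2)
  then show ?thesis
    using cross integral_sq_average_centered_le_entry[OF C(1,2) d] by (simp add: a_def b_def)
qed

lemma integral_sq_entry_ecdf_minus_G:
  assumes "finite C" "C \<subseteq> entries" "C \<noteq> {}" "d \<in> entries" "d \<notin> C"
  shows "(\<integral>X. (entry_ecdf C d X - G (\<psi> (entry X d)))\<^sup>2 \<partial>\<mu>) = indicator_variance / card C"
proof -
  have "ignores_entry c (\<lambda>X. G (\<psi> (entry X d)))" if "c \<in> C" for c
    using that assms(5) by (auto simp: ignores_entry_def)
  then show ?thesis
    using integral_sq_minus_entry_ecdf[OF assms bounded_measurable_G_entry[OF assms(4)]]
    by (simp add: power2_commute)
qed

lemma integral_le_entry_mult_le_entry: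
  assumes "c \<in> entries" "c' \<in> entries" "d \<in> entries" "c \<noteq> d" "c' \<noteq> d" "c \<noteq> c'"
  shows "(\<integral>X. le_entry c d X * le_entry c' d X \<partial>\<mu>) = (\<integral>y. (G (\<psi> y))\<^sup>2 \<partial>D)"
proof -
  have "(\<integral>X. le_entry c' d X * le_entry c d X \<partial>\<mu>) = (\<integral>X. le_entry c' d X * G (\<psi> (entry X d)) \<partial>\<mu>)"
    using assms
    by (intro integral_mult_le_entry bounded_measurable_le_entry) (auto simp: ignores_entry_def le_entry_def)
  also have "\<dots> = (\<integral>X. G (\<psi> (entry X d)) * G (\<psi> (entry X d)) \<partial>\<mu>)"
    using assms
    by (subst (1 2) mult.commute, intro integral_mult_le_entry bounded_measurable_G_entry)
       (auto simp: ignores_entry_def)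
  also have "\<dots> = (\<integral>y. G (\<psi> y) * G (\<psi> y) \<partial>D)"
    using assms by (intro integral_entry bounded_measurable_mult bounded_measurable_G_\<psi>)
  finally show ?thesis by (simp add: mult.commute power2_eq_square)
qed

lemma integral_le_entry:
  assumes "c \<in> entries" "d \<in> entries" "c \<noteq> d"
  shows "(\<integral>X. le_entry c d X \<partial>\<mu>) = (\<integral>y. G (\<psi> y) \<partial>D)"
  using integral_mult_le_entry[OF assms bounded_measurable_const, of 1]
    integral_entry[OF assms(2) bounded_measurable_G_\<psi>]
  by (simp add: ignores_entry_def)

lemma integral_ties_atomless:
  assumes atomless: "\<And>t. measure D {y \<in> space D. \<psi> y = t} = 0"
    and a: "a \<in> entries" and b: "b \<in> entries" and "a \<noteq> b"
  shows "(\<integral>X. of_bool (\<psi> (entry X a) = \<psi> (entry X b)) \<partial>\<mu>) = (0 :: real)"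
proof -
  have "(\<lambda>(s, t :: real). of_bool (s = t) :: real) \<in> borel_measurable (borel \<Otimes>\<^sub>M borel)"
    unfolding of_bool_def by measurable
  from integral_mult_integrate_out_entry[where \<rho> = "\<lambda>s t. of_bool (s = t)" and V = "\<lambda>X. \<psi> (entry X b)",
        OF a bounded_measurable_const[of \<mu> 1] _ _ _ this]
  have "(\<integral>X. of_bool (\<psi> (entry X a) = \<psi> (entry X b)) \<partial>\<mu>)
      = (\<integral>X. (\<integral>y. (of_bool (\<psi> y = \<psi> (entry X b)) :: real) \<partial>D) \<partial>\<mu>)"
    using b \<open>a \<noteq> b\<close> by (simp add: ignores_entry_def measurable_compose[OF measurable_entry measurable_\<psi>])
  also have "\<dots> = 0"
  proof -
    have "(\<integral>y. (of_bool (\<psi> y = t) :: real) \<partial>D) = (\<integral>y. indicator {y \<in> space D. \<psi> y = t} y \<partial>D)" for t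
      by (intro Bochner_Integration.integral_cong) (auto simp: indicator_def)
    then show ?thesis
      by (simp add: Collect_subset[THEN Int_absorb2] atomless)
  qed
  finally show ?thesis .
qed

lemma integral_G_atomless:
  assumes atomless: "\<And>t. measure D {y \<in> space D. \<psi> y = t} = 0"
    and a: "a \<in> entries" and b: "b \<in> entries" and "a \<noteq> b"
  shows "(\<integral>y. G (\<psi> y) \<partial>D) = 1 / 2"
proof -
  have [measurable]: "(\<lambda>X. \<psi> (entry X a)) \<in> borel_measurable \<mu>" "(\<lambda>X. \<psi> (entry X b)) \<in> borel_measurable \<mu>"
    using a b by (auto intro: measurable_compose[OF measurable_entry measurable_\<psi>])
  have "bounded_measurable \<mu> (\<lambda>X. of_bool (\<psi> (entry X a) = \<psi> (entry X b)))"
  proof (rule bounded_measurableI[where B = 1])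
    show "(\<lambda>X. of_bool (\<psi> (entry X a) = \<psi> (entry X b))) \<in> borel_measurable \<mu>"
      unfolding of_bool_def by measurable
  qed simp
  moreover have "le_entry a b X + le_entry b a X = 1 + of_bool (\<psi> (entry X a) = \<psi> (entry X b))" for X
    by (auto simp: le_entry_def)
  ultimately have "(\<integral>X. le_entry a b X \<partial>\<mu>) + (\<integral>X. le_entry b a X \<partial>\<mu>)
      = 1 + (\<integral>X. of_bool (\<psi> (entry X a) = \<psi> (entry X b)) \<partial>\<mu>)"
    using a b
    by (simp add: Bochner_Integration.integral_add[symmetric] integrable_bounded_measurable
        bounded_measurable_le_entry prob_space)
  then show ?thesis
    using integral_ties_atomless[OF assms] integral_le_entry a b \<open>a \<noteq> b\<close> by simp
qed

lemma integral_G_sq_ge_third: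
  assumes a: "a \<in> entries" and b: "b \<in> entries" and c: "c \<in> entries"
    and distinct: "a \<noteq> b" "a \<noteq> c" "b \<noteq> c"
  shows "1 / 3 \<le> (\<integral>y. (G (\<psi> y))\<^sup>2 \<partial>D)"
proof -
  have "1 \<le> le_entry b a X * le_entry c a X + le_entry a b X * le_entry c b X + le_entry a c X * le_entry b c X"
    for X
    by (auto simp: le_entry_def)
  then have "1 \<le> (\<integral>X. le_entry b a X * le_entry c a X + le_entry a b X * le_entry c b X
      + le_entry a c X * le_entry b c X \<partial>\<mu>)"
    using a b c
    by (intro integral_ge_const AE_I2 integrable_bounded_measurable bounded_measurable_add bounded_measurable_mult
        bounded_measurable_le_entry)
  also have "\<dots> = 3 * (\<integral>y. (G (\<psi> y))\<^sup>2 \<partial>D)"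
    using a b c distinct
    by (simp add: integrable_bounded_measurable bounded_measurable_mult bounded_measurable_le_entry
        integral_le_entry_mult_le_entry)
  finally show ?thesis by simp
qed

lemma indicator_variance_le_sixth:
  assumes atomless: "\<And>t. measure D {y \<in> space D. \<psi> y = t} = 0"
    and a: "a \<in> entries" and b: "b \<in> entries" and c: "c \<in> entries"
    and distinct: "a \<noteq> b" "a \<noteq> c" "b \<noteq> c"
  shows "indicator_variance \<le> 1 / 6"
proof -
  have "integrable D (\<lambda>y. G (\<psi> y))" "integrable D (\<lambda>y. (G (\<psi> y))\<^sup>2)"
    by (intro D.integrable_bounded_measurable bounded_measurable_power2 bounded_measurable_G_\<psi>)+
  then have "indicator_variance = (\<integral>y. G (\<psi> y) \<partial>D) - (\<integral>y. (G (\<psi> y))\<^sup>2 \<partial>D)"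
    by (simp add: indicator_variance_def right_diff_distrib power2_eq_square)
  then show ?thesis
    using integral_G_atomless[OF atomless a b distinct(1)] integral_G_sq_ge_third[OF a b c distinct] by simp
qed

lemma ecdf_entries:
  "finite C \<Longrightarrow> ecdf (image_mset \<psi> (image_mset (entry X) (mset_set C))) (\<psi> (entry X d)) = entry_ecdf C d X"
  by (simp add: ecdf_image_mset entry_ecdf_def le_entry_def sum_unfold_sum_mset multiset.map_comp comp_def)

end

text \<open>The bound only concerns \<open>D\<close> and \<open>\<psi>\<close>: a single agent holding three points provides the three
  distinct entries needed by \<open>indicator_variance_le_sixth\<close>.\<close>

lemma indicator_variance_atomless:
  assumes D: "prob_space D" and \<psi>: "\<psi> \<in> borel_measurable D" and atomless: "atomless_feature D \<psi>"
  shows "iid_data.indicator_variance D \<psi> \<le> 1 / 6"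
proof -
  interpret iid_data D 1 "\<lambda>_. 3" \<psi>
    by (rule iid_data.intro[OF D \<psi>])
  have "measure D {y \<in> space D. \<psi> y = t} = measure (distr D borel \<psi>) {t}" for t
    using \<psi> by (subst measure_distr) (auto simp: vimage_def Int_def conj_commute)
  moreover have "(0, 0) \<in> entries" "(0, 1) \<in> entries" "(0, 2) \<in> entries"
    unfolding entries_def by simp_all
  ultimately show ?thesis
    using atomless unfolding atomless_feature_def
    by (intro indicator_variance_le_sixth[of "(0, 0)" "(0, 1)" "(0, 2)"]) auto
qed

section \<open>The data submitted by a strategic agent\<close>

locale strategic_agent = iid_data D m n \<psi> for D :: "'a measure" and m n \<psi> +
  fixes M :: "'a measure" and g :: "'a list \<Rightarrow> 'a list" and i :: nat
  assumes sets_D: "sets D = sets M" and strategy_measurable_g: "strategy_measurable M g"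
    and i_less_m: "i < m"
begin

definition submission :: "(nat \<Rightarrow> nat \<Rightarrow> 'a) \<Rightarrow> 'a list" where
  "submission X = g (agent_data n X i)"

definition count_le :: "nat \<times> nat \<Rightarrow> (nat \<Rightarrow> nat \<Rightarrow> 'a) \<Rightarrow> real" where
  "count_le d X = (\<Sum>u\<leftarrow>submission X. of_bool (\<psi> u \<le> \<psi> (entry X d)))"

definition pooled_ecdf :: "(nat \<times> nat) set \<Rightarrow> nat \<times> nat \<Rightarrow> (nat \<Rightarrow> nat \<Rightarrow> 'a) \<Rightarrow> real" where
  "pooled_ecdf W d X = (count_le d X + (\<Sum>c\<in>W. le_entry c d X)) / (length (submission X) + card W)"

abbreviation pool :: "(nat \<times> nat) list" where
  "pool \<equiv> pool_entries m n i"

lemma measurable_own_data: "(\<lambda>X. X i) \<in> measurable \<mu> (PiM {..<n i} (\<lambda>_. M))"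
proof -
  have "(\<lambda>X. X i) \<in> measurable \<mu> (PiM {..<n i} (\<lambda>_. D))"
    using i_less_m measurable_component_singleton[of i "{..<m}" "\<lambda>j. PiM {..<n j} (\<lambda>_. D)"]
    by (simp add: data_measure_def)
  moreover have "sets (PiM {..<n i} (\<lambda>_. D)) = sets (PiM {..<n i} (\<lambda>_. M))"
    by (intro sets_PiM_cong) (simp_all add: sets_D)
  ultimately show ?thesis
    using measurable_cong_sets by blast
qed

lemma measurable_length_submission: "(\<lambda>X. length (submission X)) \<in> measurable \<mu> (count_space UNIV)"
proof -
  have "(\<lambda>x. length (g (map x [0..<n i]))) \<in> measurable (PiM {..<n i} (\<lambda>_. M)) (count_space UNIV)"
    using strategy_measurable_g by (simp add: strategy_measurable_def)
  from measurable_compose[OF measurable_own_data this] show ?thesis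
    by (simp add: submission_def agent_data_def)
qed

lemma measurable_submission_nth:
  "(\<lambda>X. submission X ! j) \<in> measurable (restrict_space \<mu> {X. j < length (submission X)}) M"
proof -
  have "(\<lambda>X. X i) \<in> measurable (restrict_space \<mu> {X. j < length (submission X)})
      (restrict_space (PiM {..<n i} (\<lambda>_. M)) {x. j < length (g (map x [0..<n i]))})"
    by (rule measurable_restrict_space3[OF measurable_own_data]) (auto simp: submission_def agent_data_def)
  moreover have "(\<lambda>x. g (map x [0..<n i]) ! j)
      \<in> measurable (restrict_space (PiM {..<n i} (\<lambda>_. M)) {x. j < length (g (map x [0..<n i]))}) M"
    using strategy_measurable_g by (simp add: strategy_measurable_def)
  ultimately show ?thesis
    using measurable_compose by (simp add: submission_def agent_data_def)
qed

lemma measurable_\<psi>_M: "\<psi> \<in> borel_measurable M"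
  using measurable_\<psi> unfolding measurable_cong_sets[OF sets_D refl] .

lemma measurable_count_le:
  assumes d: "d \<in> entries"
  shows "count_le d \<in> borel_measurable \<mu>"
proof -
  define summand :: "nat \<Rightarrow> (nat \<Rightarrow> nat \<Rightarrow> 'a) \<Rightarrow> real" where
    "summand j X = (if j < length (submission X) then of_bool (\<psi> (submission X ! j) \<le> \<psi> (entry X d)) else 0)"
    for j X
  have "summand j \<in> borel_measurable \<mu>" for j
  proof -
    let ?R = "restrict_space \<mu> {X. j < length (submission X)}"
    have [measurable]: "(\<lambda>X. \<psi> (submission X ! j)) \<in> borel_measurable ?R"
      by (rule measurable_compose[OF measurable_submission_nth measurable_\<psi>_M])
    have [measurable]: "(\<lambda>X. \<psi> (entry X d)) \<in> borel_measurable ?R"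
      using d by (intro measurable_restrict_space1 measurable_compose[OF measurable_entry measurable_\<psi>])
    have "(\<lambda>X. of_bool (\<psi> (submission X ! j) \<le> \<psi> (entry X d)) :: real) \<in> borel_measurable ?R"
      unfolding of_bool_def by measurable
    moreover have "{X \<in> space \<mu>. j < length (submission X)} \<in> sets \<mu>"
      using measurable_length_submission by measurable
    ultimately show ?thesis
      unfolding summand_def by (subst measurable_If_restrict_space_iff) simp_all
  qed
  then have "(\<lambda>X. (\<lambda>l X. \<Sum>j<l. summand j X) (length (submission X)) X) \<in> borel_measurable \<mu>"
    by (intro measurable_compose_countable[OF borel_measurable_sum measurable_length_submission])
  moreover have "count_le d = (\<lambda>X. \<Sum>j<length (submission X). summand j X)"
    by (simp add: fun_eq_iff count_le_def summand_def sum_list_sum_nth atLeast0LessThan)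
  ultimately show ?thesis
    by simp
qed

lemma bounded_measurable_pooled_ecdf:
  assumes W: "finite W" "W \<subseteq> entries" and d: "d \<in> entries"
  shows "bounded_measurable \<mu> (pooled_ecdf W d)"
proof (rule bounded_measurableI[where B = 1])
  have "le_entry c d \<in> borel_measurable \<mu>" if "c \<in> W" for c
    using bounded_measurable_le_entry[of c d] that W d by (auto simp: bounded_measurable_def)
  then show "pooled_ecdf W d \<in> borel_measurable \<mu>"
    unfolding pooled_ecdf_def
    using measurable_compose[OF measurable_length_submission, of real borel] measurable_count_le[OF d]
    by (intro borel_measurable_divide borel_measurable_add borel_measurable_sum) auto
next
  fix X
  have "0 \<le> (\<Sum>c\<in>W. le_entry c d X)" "(\<Sum>c\<in>W. le_entry c d X) \<le> card W"
    using sum_bounded_above[of W "\<lambda>c. le_entry c d X" 1] by (auto intro: sum_nonneg simp: le_entry_def)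
  moreover have "0 \<le> count_le d X"
    unfolding count_le_def by (rule sum_list_nonneg) auto
  moreover have "count_le d X \<le> length (submission X)"
    using sum_list_mono[of "submission X" "\<lambda>u. of_bool (\<psi> u \<le> \<psi> (entry X d))" "\<lambda>_. 1 :: real"]
    by (simp add: count_le_def sum_list_triv)
  ultimately show "\<bar>pooled_ecdf W d X\<bar> \<le> 1"
    by (auto simp: pooled_ecdf_def divide_le_eq_1)
qed

lemma ignores_entry_pooled_ecdf:
  assumes "fst c \<noteq> i" "c \<notin> W" "c \<noteq> d"
  shows "ignores_entry c (pooled_ecdf W d)"
proof -
  have "agent_data n (update_entry c X y) i = agent_data n X i" for X :: "nat \<Rightarrow> nat \<Rightarrow> 'a" and y
    using assms by (simp add: agent_data_def update_entry_def)
  moreover have "le_entry c' d (update_entry c X y) = le_entry c' d X" if "c' \<in> W" for c' X y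
    using assms that by (auto simp: le_entry_def)
  ultimately show ?thesis
    using assms by (simp add: ignores_entry_def pooled_ecdf_def count_le_def submission_def)
qed

lemma pooled_ecdf_truthful:
  assumes "g = id" and W: "finite W" "\<forall>c\<in>W. fst c \<noteq> i"
  shows "pooled_ecdf W d X = entry_ecdf (Pair i ` {..<n i} \<union> W) d X"
proof -
  have disjoint: "Pair i ` {..<n i} \<inter> W = {}"
    using W by auto
  have "count_le d X = (\<Sum>p<n i. le_entry (i, p) d X)"
    unfolding count_le_def submission_def agent_data_def using \<open>g = id\<close>
    by (simp add: interv_sum_list_conv_sum_set_nat le_entry_def entry_def atLeast0LessThan)
  also have "\<dots> = (\<Sum>c\<in>Pair i ` {..<n i}. le_entry c d X)"
    by (simp add: sum.reindex inj_on_def)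
  finally have "count_le d X = (\<Sum>c\<in>Pair i ` {..<n i}. le_entry c d X)" .
  moreover have "card (Pair i ` {..<n i} \<union> W) = n i + card W"
    using W disjoint by (simp add: card_Un_disjoint card_image inj_on_def)
  moreover have "length (submission X) = n i"
    unfolding submission_def agent_data_def using \<open>g = id\<close> by simp
  ultimately show ?thesis
    unfolding pooled_ecdf_def entry_ecdf_def using W disjoint by (simp add: sum.union_disjoint)
qed

lemma ecdf_submission_entries:
  "finite C \<Longrightarrow> ecdf (image_mset \<psi> (mset (submission X) + image_mset (entry X) (mset_set C))) (\<psi> (entry X d))
    = pooled_ecdf C d X"
  by (subst ecdf_image_mset) (simp add: ecdf_image_mset pooled_ecdf_def count_le_def le_entry_def sum_unfold_sum_mset
      multiset.map_comp comp_def sum_mset_sum_list[symmetric])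

lemma pool_nth:
  assumes "q < length pool"
  shows "pool ! q \<in> entries" "fst (pool ! q) \<noteq> i"
  using nth_mem[OF assms] by (auto simp: set_pool_entries entries_def)

lemma inj_on_pool: "inj_on (nth pool) {..<length pool}"
  by (rule inj_on_nth[OF distinct_pool_entries]) simp

lemma pool_split:
  assumes "(t, W) \<in> splits (length pool) w"
  defines "Z \<equiv> {..<length pool} - {t} - W"
  shows "pool ! t \<in> entries" "fst (pool ! t) \<noteq> i"
    and "finite W" "nth pool ` W \<subseteq> entries" "\<forall>c\<in>nth pool ` W. fst c \<noteq> i" "pool ! t \<notin> nth pool ` W"
    and "card (nth pool ` W) = w"
    and "nth pool ` Z \<subseteq> entries" "pool ! t \<notin> nth pool ` Z" "nth pool ` Z \<inter> nth pool ` W = {}"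
    and "\<forall>c\<in>nth pool ` Z. fst c \<noteq> i" "card (nth pool ` Z) = length pool - 1 - w"
proof -
  have t: "t < length pool" and W: "W \<subseteq> {..<length pool} - {t}" "card W = w"
    using assms(1) by (auto simp: splits_def)
  then show "finite W" by (meson finite_Diff finite_lessThan finite_subset)
  have Z: "Z \<subseteq> {..<length pool}" by (auto simp: Z_def)
  have inj: "inj_on (nth pool) A" if "A \<subseteq> {..<length pool}" for A
    using inj_on_pool that by (rule inj_on_subset)
  show "pool ! t \<in> entries" "fst (pool ! t) \<noteq> i" using pool_nth[OF t] by auto
  show "nth pool ` W \<subseteq> entries" "\<forall>c\<in>nth pool ` W. fst c \<noteq> i"
    "nth pool ` Z \<subseteq> entries" "\<forall>c\<in>nth pool ` Z. fst c \<noteq> i"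
    using W Z pool_nth by (auto simp: subset_iff)
  have "pool ! t \<in> nth pool ` W \<longleftrightarrow> t \<in> W" "pool ! t \<in> nth pool ` Z \<longleftrightarrow> t \<in> Z"
    using W Z t by (auto intro!: inj_on_image_mem_iff[OF inj_on_pool])
  then show "pool ! t \<notin> nth pool ` W" "pool ! t \<notin> nth pool ` Z"
    using W by (auto simp: Z_def)
  have "nth pool ` Z \<inter> nth pool ` W = nth pool ` (Z \<inter> W)"
    using W Z by (intro inj_on_image_Int[OF inj_on_pool, symmetric]) auto
  then show "nth pool ` Z \<inter> nth pool ` W = {}"
    by (auto simp: Z_def)
  show "card (nth pool ` W) = w"
    using W by (subst card_image) (auto intro: inj)
  have "card Z = length pool - 1 - w"
    using W t \<open>finite W\<close> by (simp add: Z_def card_Diff_subset)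
  then show "card (nth pool ` Z) = length pool - 1 - w"
    using Z by (subst card_image) (auto intro: inj)
qed

lemma image_mset_nth_others_pool:
  assumes "A \<subseteq> {..<length pool}"
  shows "image_mset ((!) (others_pool m n i X)) (mset_set A) = image_mset (entry X) (mset_set (nth pool ` A))"
proof -
  have "finite A" using assms finite_subset by blast
  then have "image_mset ((!) (others_pool m n i X)) (mset_set A) = image_mset (entry X) (image_mset (nth pool) (mset_set A))"
    using assms by (auto simp: others_pool_eq_map_entry multiset.map_comp intro!: image_mset_cong)
  also have "image_mset (nth pool) (mset_set A) = mset_set (nth pool ` A)"
    using assms by (intro image_mset_mset_set inj_on_subset[OF inj_on_pool])
  finally show ?thesis .
qed

lemma feature_sq_gap_eq:
  assumes split: "(t, W) \<in> splits (length pool) w"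
  shows "feature_sq_gap \<psi> (submission X) (others_pool m n i X) t W
    = (pooled_ecdf (nth pool ` W) (pool ! t) X
       - entry_ecdf (nth pool ` ({..<length pool} - {t} - W)) (pool ! t) X)\<^sup>2"
proof -
  let ?P = "others_pool m n i X" and ?Z = "{..<length pool} - {t} - W"
  have t: "t < length pool" and W: "W \<subseteq> {..<length pool}"
    using split by (auto simp: splits_def)
  then have "?P ! t = entry X (pool ! t)" "length ?P = length pool"
    by (simp_all add: others_pool_eq_map_entry)
  moreover have "image_mset ((!) ?P) (mset_set W) = image_mset (entry X) (mset_set (nth pool ` W))"
    "image_mset ((!) ?P) (mset_set ?Z) = image_mset (entry X) (mset_set (nth pool ` ?Z))"
    using W by (auto intro!: image_mset_nth_others_pool)
  moreover have "finite W" "finite ?Z"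
    using pool_split(3)[OF split] by auto
  ultimately show ?thesis
    unfolding feature_sq_gap_def
    by (simp only: ecdf_submission_entries ecdf_entries finite_imageI)
qed

lemma bounded_measurable_feature_sq_gap:
  assumes split: "(t, W) \<in> splits (length pool) w"
  shows "bounded_measurable \<mu> (\<lambda>X. feature_sq_gap \<psi> (submission X) (others_pool m n i X) t W)"
proof -
  note facts = pool_split[OF split]
  have "bounded_measurable \<mu> (entry_ecdf (nth pool ` ({..<length pool} - {t} - W)) (pool ! t))"
    unfolding entry_ecdf_def using facts
    by (intro bounded_measurable_divide bounded_measurable_sum bounded_measurable_le_entry) auto
  with facts show ?thesis
    unfolding feature_sq_gap_eq[OF split]
    by (intro bounded_measurable_power2 bounded_measurable_diff bounded_measurable_pooled_ecdf) auto
qed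

lemma integral_feature_sq_gap:
  assumes split: "(t, W) \<in> splits (length pool) w" and "w < length pool - 1"
  shows "(\<integral>X. feature_sq_gap \<psi> (submission X) (others_pool m n i X) t W \<partial>\<mu>)
    = (\<integral>X. (pooled_ecdf (nth pool ` W) (pool ! t) X - G (\<psi> (entry X (pool ! t))))\<^sup>2 \<partial>\<mu>)
      + indicator_variance / (length pool - 1 - w)"
proof -
  let ?Z = "nth pool ` ({..<length pool} - {t} - W)" and ?F = "pooled_ecdf (nth pool ` W) (pool ! t)"
  note facts = pool_split[OF split]
  have "?Z \<noteq> {}"
    using facts(12) \<open>w < length pool - 1\<close> by (metis card.empty zero_less_diff less_irrefl)
  moreover have "ignores_entry c ?F" if "c \<in> ?Z" for c
  proof (rule ignores_entry_pooled_ecdf)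
    show "fst c \<noteq> i" "c \<notin> nth pool ` W" "c \<noteq> pool ! t"
      using facts(9-11) that by blast+
  qed
  moreover have "bounded_measurable \<mu> ?F"
    using facts by (intro bounded_measurable_pooled_ecdf) auto
  ultimately show ?thesis
    unfolding feature_sq_gap_eq[OF split]
    using integral_sq_minus_entry_ecdf[of ?Z "pool ! t" ?F] facts(1,8,9,12) by simp
qed

lemma integral_sq_pooled_ecdf_minus_G_truthful:
  assumes "g = id" "1 \<le> n i" and split: "(t, W) \<in> splits (length pool) w"
  shows "(\<integral>X. (pooled_ecdf (nth pool ` W) (pool ! t) X - G (\<psi> (entry X (pool ! t))))\<^sup>2 \<partial>\<mu>)
    = indicator_variance / (n i + w)"
proof -
  let ?C = "Pair i ` {..<n i} \<union> nth pool ` W"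
  note facts = pool_split[OF split]
  have "?C \<subseteq> entries" "pool ! t \<notin> ?C"
    using facts i_less_m by (auto simp: entries_def)
  moreover have "(i, 0) \<in> ?C"
    using \<open>1 \<le> n i\<close> by auto
  then have "?C \<noteq> {}" by blast
  moreover have "Pair i ` {..<n i} \<inter> nth pool ` W = {}"
    using facts(5) by (auto simp: disjoint_iff) (metis fst_conv)
  then have "card ?C = n i + w"
    using facts(3,7) by (simp add: card_Un_disjoint card_image inj_on_def)
  ultimately show ?thesis
    using facts by (simp add: pooled_ecdf_truthful[OF \<open>g = id\<close>] integral_sq_entry_ecdf_minus_G)
qed

end

lemma strategic_agentI:
  assumes "prob_space D" "sets D = sets M" "\<psi> \<in> borel_measurable M" "strategy_measurable M g" "i < m"
  shows "strategic_agent D m \<psi> M g i"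
  using assms measurable_cong_sets[OF assms(2) refl]
  by (intro strategic_agent.intro iid_data.intro strategic_agent_axioms.intro) auto

section \<open>Truthfulness\<close>

lemma integral_average_le_add:
  fixes f g :: "'i \<Rightarrow> 'a \<Rightarrow> real"
  assumes A: "finite A" "A \<noteq> {}"
    and f: "\<And>a. a \<in> A \<Longrightarrow> integrable M (f a)" and g: "\<And>a. a \<in> A \<Longrightarrow> integrable M (g a)"
    and le: "\<And>a. a \<in> A \<Longrightarrow> (\<integral>x. f a x \<partial>M) \<le> (\<integral>x. g a x \<partial>M) + c"
  shows "(\<integral>x. (\<Sum>a\<in>A. f a x) / card A \<partial>M) \<le> (\<integral>x. (\<Sum>a\<in>A. g a x) / card A \<partial>M) + c"
proof -
  have "(\<Sum>a\<in>A. \<integral>x. f a x \<partial>M) \<le> (\<Sum>a\<in>A. (\<integral>x. g a x \<partial>M) + c)"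
    by (rule sum_mono) (rule le)
  then have "(\<Sum>a\<in>A. \<integral>x. f a x \<partial>M) / card A \<le> ((\<Sum>a\<in>A. \<integral>x. g a x \<partial>M) + card A * c) / card A"
    by (intro divide_right_mono) (simp_all add: sum.distrib)
  then show ?thesis
    using A by (simp add: Bochner_Integration.integral_sum[OF f] Bochner_Integration.integral_sum[OF g] add_divide_distrib)
qed

lemma (in prob_space) integral_le_integral_add_AE:
  fixes f g :: "'a \<Rightarrow> real"
  assumes "integrable M f" "integrable M g" "AE x in M. f x \<le> g x + c"
  shows "(\<integral>x. f x \<partial>M) \<le> (\<integral>x. g x \<partial>M) + c"
proof -
  have "(\<integral>x. f x \<partial>M) \<le> (\<integral>x. g x + c \<partial>M)"
    using assms by (intro integral_mono_AE) auto
  then show ?thesis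
    using assms by (simp add: prob_space)
qed

lemma cSUP_le_cSUP_add:
  fixes f g :: "'b \<Rightarrow> real"
  assumes "bdd_above (g ` A)" "0 \<le> c" "\<And>x. x \<in> A \<Longrightarrow> f x \<le> g x + c"
  shows "(SUP x\<in>A. f x) \<le> (SUP x\<in>A. g x) + c"
proof (cases "A = {}")
  case False
  have "f x \<le> (SUP x\<in>A. g x) + c" if "x \<in> A" for x
    using assms(3)[OF that] cSUP_upper[OF that assms(1)] by linarith
  with False show ?thesis
    by (intro cSUP_least) auto
qed (use assms in simp)

lemma integral_feature_sq_gap_truthful_le:
  fixes D M :: "'a measure"
  assumes D: "prob_space D" "sets D = sets M" and \<psi>: "\<psi> \<in> borel_measurable M"
    and g: "strategy_measurable M g" and i: "i < m" "1 \<le> n i"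
    and split: "(t, W) \<in> splits (length (pool_entries m n i)) w"
    and w: "w < length (pool_entries m n i) - 1"
    and variance: "iid_data.indicator_variance D \<psi> \<le> \<beta>"
  shows "(\<integral>X. feature_sq_gap \<psi> (agent_data n X i) (others_pool m n i X) t W \<partial>data_measure m n D)
    \<le> (\<integral>X. feature_sq_gap \<psi> (g (agent_data n X i)) (others_pool m n i X) t W \<partial>data_measure m n D)
      + \<beta> / (n i + w)"
proof -
  interpret S: strategic_agent D m n \<psi> M g i
    by (rule strategic_agentI[OF D \<psi> g i(1)])
  interpret T: strategic_agent D m n \<psi> M id i
    by (rule strategic_agentI[OF D \<psi> strategy_measurable_id i(1)])
  let ?L = "length S.pool - 1 - w"
  have "0 \<le> (\<integral>X. (S.pooled_ecdf (nth S.pool ` W) (S.pool ! t) X - S.G (\<psi> (entry X (S.pool ! t))))\<^sup>2 \<partial>S.\<mu>)"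
    by simp
  then have strategic: "S.indicator_variance / ?L
      \<le> (\<integral>X. feature_sq_gap \<psi> (g (agent_data n X i)) (others_pool m n i X) t W \<partial>S.\<mu>)"
    using S.integral_feature_sq_gap[OF split w] by (simp add: S.submission_def)
  have "(\<integral>X. feature_sq_gap \<psi> (agent_data n X i) (others_pool m n i X) t W \<partial>S.\<mu>)
      = S.indicator_variance / (n i + w) + S.indicator_variance / ?L"
    using T.integral_feature_sq_gap[OF split w] T.integral_sq_pooled_ecdf_minus_G_truthful[OF refl i(2) split]
    by (simp add: T.submission_def)
  also have "\<dots> \<le> \<beta> / (n i + w) + (\<integral>X. feature_sq_gap \<psi> (g (agent_data n X i)) (others_pool m n i X) t W \<partial>S.\<mu>)"
    using variance strategic by (intro add_mono divide_right_mono) auto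
  finally show ?thesis
    by (simp add: add.commute)
qed

lemma bounded_measurable_feature_sq_gap_data:
  fixes D M :: "'a measure"
  assumes D: "prob_space D" "sets D = sets M" and \<psi>: "\<psi> \<in> borel_measurable M"
    and g: "strategy_measurable M g" and "i < m"
    and split: "(t, W) \<in> splits (length (pool_entries m n i)) w"
  shows "bounded_measurable (data_measure m n D)
    (\<lambda>X. feature_sq_gap \<psi> (g (agent_data n X i)) (others_pool m n i X) t W)"
proof -
  interpret strategic_agent D m n \<psi> M g i
    by (rule strategic_agentI[OF D \<psi> g \<open>i < m\<close>])
  show ?thesis
    using bounded_measurable_feature_sq_gap[OF split] by (simp add: submission_def)
qed

lemma expected_loss_eq_average:
  fixes m i K :: nat and n s :: "nat \<Rightarrow> nat"
  defines "A \<equiv> splits (length (pool_entries m n i)) (s (length (pool_entries m n i))) \<times> {..<K}"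
  shows "expected_loss m n K \<phi> s i D g
    = (\<integral>X. (\<Sum>((t, W), k)\<in>A. feature_sq_gap (\<phi> k) (g (agent_data n X i)) (others_pool m n i X) t W) / card A
        \<partial>data_measure m n D)"
  unfolding expected_loss_def mech_loss_eq_average A_def length_others_pool ..

lemma expected_loss_truthful_le:
  fixes D M :: "'a measure" and m i K :: nat and n s :: "nat \<Rightarrow> nat"
  defines "N \<equiv> length (pool_entries m n i)"
  assumes D: "prob_space D" "sets D = sets M" and \<phi>: "\<forall>k<K. \<phi> k \<in> borel_measurable M"
    and g: "strategy_measurable M g" and i: "i < m" "1 \<le> n i" and "1 \<le> K" and s: "s N < N - 1"
    and variance: "\<forall>k<K. iid_data.indicator_variance D (\<phi> k) \<le> \<beta>"
  shows "expected_loss m n K \<phi> s i D id \<le> expected_loss m n K \<phi> s i D g + \<beta> / (n i + s N)"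
proof -
  let ?A = "splits N (s N) \<times> {..<K}"
  let ?gap = "\<lambda>h a X. (\<lambda>((t, W), k). feature_sq_gap (\<phi> k) (h (agent_data n X i)) (others_pool m n i X) t W) a"
  interpret \<mu>: prob_space "data_measure m n D"
    using D(1) by (rule prob_space_data_measure)
  have integrable: "integrable (data_measure m n D) (?gap h a)"
    if "a \<in> ?A" "strategy_measurable M h" for h a
    using that \<phi> bounded_measurable_feature_sq_gap_data[OF D _ that(2) i(1)]
    by (auto simp: N_def intro!: \<mu>.integrable_bounded_measurable)
  have "(\<integral>X. (\<Sum>a\<in>?A. ?gap id a X) / card ?A \<partial>data_measure m n D)
      \<le> (\<integral>X. (\<Sum>a\<in>?A. ?gap g a X) / card ?A \<partial>data_measure m n D) + \<beta> / (n i + s N)"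
  proof (rule integral_average_le_add)
    show "finite ?A" "?A \<noteq> {}"
      using splits_nonempty[of "s N" N] s \<open>1 \<le> K\<close> by (auto simp: finite_splits lessThan_empty_iff)
    fix a assume a: "a \<in> ?A"
    show "integrable (data_measure m n D) (?gap id a)" "integrable (data_measure m n D) (?gap g a)"
      by (rule integrable[OF a strategy_measurable_id], rule integrable[OF a g])
    from a obtain t W k where "a = ((t, W), k)" "(t, W) \<in> splits N (s N)" "k < K"
      by auto
    then show "(\<integral>X. ?gap id a X \<partial>data_measure m n D) \<le> (\<integral>X. ?gap g a X \<partial>data_measure m n D) + \<beta> / (n i + s N)"
      using integral_feature_sq_gap_truthful_le[where \<psi> = "\<phi> k" and n = n and i = i and w = "s N", OF D _ g i]
        \<phi> variance s
      by (simp add: N_def)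
  qed
  then show ?thesis
    by (simp add: expected_loss_eq_average N_def)
qed

lemma expected_loss_nonneg: "0 \<le> expected_loss m n K \<phi> s i D g"
  unfolding expected_loss_def by (rule integral_nonneg_AE) (simp add: mech_loss_bounds)

lemma expected_loss_le_1:
  assumes "prob_space D"
  shows "expected_loss m n K \<phi> s i D g \<le> 1"
proof -
  interpret prob_space "data_measure m n D"
    using assms by (rule prob_space_data_measure)
  have "(\<integral>\<^sup>+X. mech_loss K \<phi> s (g (agent_data n X i)) (others_pool m n i X) \<partial>data_measure m n D)
      \<le> (\<integral>\<^sup>+X. 1 \<partial>data_measure m n D)"
    by (intro nn_integral_mono) (simp add: mech_loss_bounds)
  then show ?thesis
    unfolding expected_loss_def by (intro integral_real_bounded) (simp_all add: emeasure_space_1)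
qed

lemma measurable_expected_loss:
  fixes M :: "'a measure"
  assumes \<phi>: "\<forall>k<K. \<phi> k \<in> borel_measurable M" and g: "strategy_measurable M g" and "i < m"
  shows "(\<lambda>D. expected_loss m n K \<phi> s i D g) \<in> borel_measurable (prob_algebra M)"
proof (cases "space (prob_algebra M) = {}")
  case True
  then show ?thesis by (simp add: measurable_def)
next
  case False
  then obtain D0 where D0: "prob_space D0" "sets D0 = sets M"
    by (auto simp: space_prob_algebra)
  let ?A = "splits (length (pool_entries m n i)) (s (length (pool_entries m n i))) \<times> {..<K}"
  have sets: "sets (data_measure m n D0) = sets (data_measure m n M)"
    unfolding data_measure_def using D0(2) by (intro sets_PiM_cong refl) simp
  have "(\<lambda>X. (\<lambda>((t, W), k). feature_sq_gap (\<phi> k) (g (agent_data n X i)) (others_pool m n i X) t W) a)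
      \<in> borel_measurable (data_measure m n M)" if "a \<in> ?A" for a
    using that \<phi> bounded_measurable_feature_sq_gap_data[where n = n, OF D0 _ g \<open>i < m\<close>]
    unfolding bounded_measurable_def measurable_cong_sets[OF sets refl] by auto
  then have "(\<lambda>X. mech_loss K \<phi> s (g (agent_data n X i)) (others_pool m n i X)) \<in> borel_measurable (data_measure m n M)"
    unfolding mech_loss_eq_average length_others_pool by (intro borel_measurable_divide borel_measurable_sum) auto
  from measurable_compose[OF measurable_prob_algebraD[OF measurable_data_measure] integral_measurable_subprob_algebra[OF this]]
  show ?thesis
    unfolding expected_loss_def .
qed

lemma integrable_expected_loss:
  fixes M :: "'a measure"
  assumes "prob_space P" "sets P = sets (prob_algebra M)"
    and "\<forall>k<K. \<phi> k \<in> borel_measurable M" "strategy_measurable M g" "i < m"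
  shows "integrable P (\<lambda>D. expected_loss m n K \<phi> s i D g)"
proof -
  interpret prob_space P by fact
  have "(\<lambda>D. expected_loss m n K \<phi> s i D g) \<in> borel_measurable P"
    using measurable_expected_loss[OF assms(3-5)] unfolding measurable_cong_sets[OF assms(2) refl] .
  moreover have "space P = space (prob_algebra M)"
    using assms(2) by (rule sets_eq_imp_space_eq)
  ultimately show ?thesis
    by (intro integrable_const_bound[where B = 1])
       (auto simp: space_prob_algebra expected_loss_nonneg expected_loss_le_1)
qed

lemma expected_loss_truthful_bounds:
  fixes M :: "'a measure" and m i K :: nat and n s :: "nat \<Rightarrow> nat"
  defines "N \<equiv> length (pool_entries m n i)"
  assumes D: "D \<in> space (prob_algebra M)" and \<phi>: "\<forall>k<K. \<phi> k \<in> borel_measurable M"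
    and g: "strategy_measurable M g" and i: "i < m" "1 \<le> n i" and "1 \<le> K" and s: "s N < N - 1"
  shows "expected_loss m n K \<phi> s i D id \<le> expected_loss m n K \<phi> s i D g + (1 / 4) / (n i + s N)"
    and "\<forall>k<K. atomless_feature D (\<phi> k)
      \<Longrightarrow> expected_loss m n K \<phi> s i D id \<le> expected_loss m n K \<phi> s i D g + (1 / 6) / (n i + s N)"
proof -
  have D': "prob_space D" "sets D = sets M"
    using D by (auto simp: space_prob_algebra)
  have \<phi>_D: "\<phi> k \<in> borel_measurable D" if "k < K" for k
    using \<phi> that unfolding measurable_cong_sets[OF D'(2) refl] by blast
  note truthful_le = expected_loss_truthful_le[where n = n and i = i and s = s,
      OF D' \<phi> g i \<open>1 \<le> K\<close> s[unfolded N_def], folded N_def]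
  show "expected_loss m n K \<phi> s i D id \<le> expected_loss m n K \<phi> s i D g + (1 / 4) / (n i + s N)"
    using \<phi>_D by (intro truthful_le allI impI iid_data.indicator_variance_le_quarter iid_data.intro D'(1))
  show "expected_loss m n K \<phi> s i D id \<le> expected_loss m n K \<phi> s i D g + (1 / 6) / (n i + s N)"
    if "\<forall>k<K. atomless_feature D (\<phi> k)"
    using \<phi>_D that by (intro truthful_le allI impI indicator_variance_atomless D'(1)) auto
qed

theorem mainTheorem9:
  fixes M :: "'a measure"
    and m :: nat and n :: "nat \<Rightarrow> nat" and i :: nat
    and K :: nat and \<phi> :: "nat \<Rightarrow> 'a \<Rightarrow> real"
    and s :: "nat \<Rightarrow> nat"
    and f :: "'a list \<Rightarrow> 'a list"
    and Prior :: "'a measure measure"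
    and Fam :: "'a measure set"
  assumes m2: "m \<ge> 2"
    and n_pos: "\<forall>j<m. n j \<ge> 1"
    and K_pos: "K \<ge> 1"
    and \<phi>_meas: "\<forall>k<K. \<phi> k \<in> borel_measurable M"
    and s_lt: "\<forall>N\<ge>2. s N < N - 1"
    and i_lt: "i < m"
    and N_ge2: "(\<Sum>j\<in>{..<m} - {i}. n j) \<ge> 2"
    and f_meas: "strategy_measurable M f"
    and Prior_prob: "prob_space Prior"
    and Prior_sets: "sets Prior = sets (prob_algebra M)"
    and Fam_dists: "\<forall>D\<in>Fam. prob_space D \<and> sets D = sets M"
  defines "N \<equiv> (\<Sum>j\<in>{..<m} - {i}. n j)"
  defines "\<epsilon>1 \<equiv> (1/4) * (1 / real (n i + s N) + 1 / real (N - 1 - s N))"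
    and "\<epsilon>2 \<equiv> 1 / (6 * real (n i + s N))"
  defines "EL \<equiv> expected_loss m n K \<phi> s i"
  shows
    "(\<integral>D. EL D id \<partial>Prior) \<le> (\<integral>D. EL D f \<partial>Prior) + \<epsilon>1
     \<and> (SUP D\<in>Fam. EL D id) \<le> (SUP D\<in>Fam. EL D f) + \<epsilon>1
     \<and> ((AE D in Prior. \<forall>k<K. atomless_feature D (\<phi> k))
          \<longrightarrow> (\<integral>D. EL D id \<partial>Prior) \<le> (\<integral>D. EL D f \<partial>Prior) + \<epsilon>2)
     \<and> ((\<forall>D\<in>Fam. \<forall>k<K. atomless_feature D (\<phi> k))
          \<longrightarrow> (SUP D\<in>Fam. EL D id) \<le> (SUP D\<in>Fam. EL D f) + \<epsilon>2)"
proof -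
  interpret Prior: prob_space Prior by (fact Prior_prob)
  have "s N < N - 1" "N = length (pool_entries m n i)" "1 \<le> n i"
    using s_lt N_ge2 n_pos i_lt by (auto simp: N_def length_pool_entries)
  note bounds = expected_loss_truthful_bounds[where n = n and i = i and s = s and g = f,
      OF _ \<phi>_meas f_meas i_lt \<open>1 \<le> n i\<close> K_pos, folded \<open>N = _\<close> EL_def, OF _ \<open>s N < N - 1\<close>]
  have "(1 / 4) / (n i + s N) \<le> \<epsilon>1" "\<epsilon>2 = (1 / 6) / (n i + s N)"
    by (simp_all add: \<epsilon>1_def \<epsilon>2_def distrib_left)
  then have pointwise: "EL D id \<le> EL D f + \<epsilon>1"
    "(\<forall>k<K. atomless_feature D (\<phi> k)) \<Longrightarrow> EL D id \<le> EL D f + \<epsilon>2" if "D \<in> space (prob_algebra M)" for D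
    using bounds[OF that] by fastforce+
  have space_Prior: "space Prior = space (prob_algebra M)" and Fam: "Fam \<subseteq> space (prob_algebra M)"
    using sets_eq_imp_space_eq[OF Prior_sets] Fam_dists by (auto simp: space_prob_algebra)
  have "bdd_above ((\<lambda>D. EL D f) ` Fam)" "0 \<le> \<epsilon>1" "0 \<le> \<epsilon>2"
    using Fam_dists by (auto simp: EL_def \<epsilon>1_def \<epsilon>2_def intro!: bdd_aboveI[where M = 1] expected_loss_le_1)
  moreover note integrable = integrable_expected_loss[where n = n and s = s, OF Prior_prob Prior_sets \<phi>_meas _ i_lt,
      folded EL_def]
  ultimately show ?thesis
    using pointwise Fam space_Prior
    by (auto intro!: Prior.integral_le_integral_add_AE integrable f_meas strategy_measurable_id cSUP_le_cSUP_add
        elim!: AE_mp intro: AE_I2)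
qed

end
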